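(* Let $a\ge b\ge1$ be integers with either $b\ge2$, or $b=1$ and $a\ge5$, and $A=\begin{pmatrix}2&-a\\-b&2\end{pmatrix}$. Then: (1) if $j\in\mathbb Z_+$, $k\ge1$ and $j\equiv k\pmod 2$, then $(\beta_1^j,\beta_2^k)=(\beta_1^{j+1},\beta_2^{k-1})$; (2) the sequence $\langle\beta_1^{2k},(\beta_2^0)^\vee\rangle$, $k\in\mathbb Z_+$, is decreasing, and strictly decreasing if $ab>4$; (3) $a\langle\beta_2^{2k},(\beta_1^0)^\vee\rangle=b\langle\beta_1^{2k},(\beta_2^0)^\vee\rangle$ for all $k\in\mathbb Z_+$.
   Context: Let $\mathfrak g(A)$ have simple roots $\alpha_1,\alpha_2$, invariant symmetric bilinear form $(\cdot,\cdot)$ with $(\alpha_1,\alpha_1)=2$, $(\alpha_2,\alpha_2)=2a/b$, $(\alpha_1,\alpha_2)=-a$, and for a real root $\beta$ let $\langle\lambda,\beta^\vee\rangle=2(\lambda,\beta)/(\beta,\beta)$. $\mathbb Z_+=\{0,1,2,\dots\}$. Define $c_0=d_0=0$, $c_1=d_1=1$, $c_{k+2}+c_k=a d_{k+1}$, $d_{k+2}+d_k=b c_{k+1}$, and $\beta_1^j=c_j\alpha_1+d_{j+1}\alpha_2$, $\beta_2^j=c_{j+1}\alpha_1+d_j\alpha_2$. *)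

theory Defs
  imports Complex_Main
begin

text \<open>Elements of the root lattice are represented by their coordinates
  (x1, x2) meaning x1 * alpha1 + x2 * alpha2.\<close>

type_synonym rlat = "int \<times> int"

definition alpha1 :: rlat where "alpha1 = (1, 0)"
definition alpha2 :: rlat where "alpha2 = (0, 1)"

text \<open>Invariant symmetric bilinear form: (alpha1,alpha1)=2, (alpha2,alpha2)=2a/b,
  (alpha1,alpha2)=-a.\<close>
definition bform :: "int \<Rightarrow> int \<Rightarrow> rlat \<Rightarrow> rlat \<Rightarrow> real" where
  "bform a b x y =
     2 * of_int (fst x) * of_int (fst y)
   - of_int a * (of_int (fst x) * of_int (snd y) + of_int (snd x) * of_int (fst y))
   + (2 * of_int a / of_int b) * of_int (snd x) * of_int (snd y)"

definition copair :: "int \<Rightarrow> int \<Rightarrow> rlat \<Rightarrow> rlat \<Rightarrow> real" where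
  "copair a b lam beta = 2 * bform a b lam beta / bform a b beta beta"

fun cdseq :: "int \<Rightarrow> int \<Rightarrow> nat \<Rightarrow> int \<times> int" where
  "cdseq a b 0 = (0, 0)"
| "cdseq a b (Suc 0) = (1, 1)"
| "cdseq a b (Suc (Suc k)) =
     (a * snd (cdseq a b (Suc k)) - fst (cdseq a b k),
      b * fst (cdseq a b (Suc k)) - snd (cdseq a b k))"

definition cseq :: "int \<Rightarrow> int \<Rightarrow> nat \<Rightarrow> int" where "cseq a b k = fst (cdseq a b k)"
definition dseq :: "int \<Rightarrow> int \<Rightarrow> nat \<Rightarrow> int" where "dseq a b k = snd (cdseq a b k)"

definition beta1 :: "int \<Rightarrow> int \<Rightarrow> nat \<Rightarrow> rlat" where
  "beta1 a b j = (cseq a b j, dseq a b (Suc j))"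
definition beta2 :: "int \<Rightarrow> int \<Rightarrow> nat \<Rightarrow> rlat" where
  "beta2 a b j = (cseq a b (Suc j), dseq a b j)"

end

theory Submission
  imports Defs
begin

text \<open>Put \<open>P = ab - 2\<close> and let \<open>u\<close> be the Lucas sequence \<open>u 0 = 0\<close>, \<open>u 1 = 1\<close>,
  \<open>u (m + 2) = P u (m + 1) - u m\<close>. Then \<open>c (2m) = a u m\<close>, \<open>d (2m) = b u m\<close> and
  \<open>c (2m + 1) = d (2m + 1) = u m + u (m + 1)\<close>, so (1) becomes a polynomial identity modulo
  the recurrence, while \<open>\<langle>\<beta>\<^sub>1\<^sup>2\<^sup>k, \<alpha>\<^sub>1\<^sup>\<vee>\<rangle> = a (u k - u (k + 1))\<close> and
  \<open>\<langle>\<beta>\<^sub>2\<^sup>2\<^sup>k, \<alpha>\<^sub>2\<^sup>\<vee>\<rangle> = b (u k - u (k + 1))\<close>, which gives (3). For (2), the second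
  difference of \<open>u\<close> at \<open>k\<close> is \<open>(P - 2) u (k + 1)\<close>, and \<open>u\<close> is increasing once
  \<open>P \<ge> 2\<close>, i.e. \<open>ab \<ge> 4\<close>.\<close>

fun lucas_u :: "int \<Rightarrow> nat \<Rightarrow> int" where
  "lucas_u P 0 = 0"
| "lucas_u P (Suc 0) = 1"
| "lucas_u P (Suc (Suc m)) = P * lucas_u P (Suc m) - lucas_u P m"

lemma lucas_u_nonneg_less_Suc:
  assumes "2 \<le> P"
  shows "0 \<le> lucas_u P m \<and> lucas_u P m < lucas_u P (Suc m)"
proof (induction m)
  case (Suc m)
  have "lucas_u P (Suc (Suc m)) - lucas_u P (Suc m)
      = (P - 2) * lucas_u P (Suc m) + (lucas_u P (Suc m) - lucas_u P m)"
    by (simp add: algebra_simps)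
  moreover have "0 \<le> (P - 2) * lucas_u P (Suc m)"
    using assms Suc.IH by simp
  ultimately show ?case
    using Suc.IH by linarith
qed simp

lemma lucas_u_Suc_pos: "2 \<le> P \<Longrightarrow> 0 < lucas_u P (Suc m)"
  using lucas_u_nonneg_less_Suc[of P m] by linarith

lemma lucas_u_second_difference:
  "lucas_u P (Suc (Suc m)) - lucas_u P (Suc m) - (lucas_u P (Suc m) - lucas_u P m)
     = (P - 2) * lucas_u P (Suc m)"
  by (simp add: algebra_simps)

lemma lucas_u_difference_mono:
  "2 \<le> P \<Longrightarrow> lucas_u P (Suc m) - lucas_u P m \<le> lucas_u P (Suc (Suc m)) - lucas_u P (Suc m)"
  using lucas_u_second_difference[of P m] lucas_u_Suc_pos[of P m] by simp

lemma lucas_u_difference_strict_mono: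
  "2 < P \<Longrightarrow> lucas_u P (Suc m) - lucas_u P m < lucas_u P (Suc (Suc m)) - lucas_u P (Suc m)"
  using lucas_u_second_difference[of P m] lucas_u_Suc_pos[of P m] by simp

lemma cdseq_eq_lucas_u:
  fixes a b :: int
  defines "u \<equiv> lucas_u (a * b - 2)"
  shows "cdseq a b (2 * m) = (a * u m, b * u m)
       \<and> cdseq a b (Suc (2 * m)) = (u m + u (Suc m), u m + u (Suc m))"
proof (induction m)
  case (Suc m)
  have "cdseq a b (2 * Suc m) = (a * u (Suc m), b * u (Suc m))"
    using Suc.IH by (simp add: algebra_simps)
  with Suc.IH show ?case
    by (simp add: u_def algebra_simps)
qed (simp add: u_def)

lemma beta1_even:
    "beta1 a b (2 * m) = (a * lucas_u (a * b - 2) m, lucas_u (a * b - 2) m + lucas_u (a * b - 2) (Suc m))"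
  and beta2_even:
    "beta2 a b (2 * m) = (lucas_u (a * b - 2) m + lucas_u (a * b - 2) (Suc m), b * lucas_u (a * b - 2) m)"
  and beta1_odd:
    "beta1 a b (Suc (2 * m)) =
       (lucas_u (a * b - 2) m + lucas_u (a * b - 2) (Suc m), b * lucas_u (a * b - 2) (Suc m))"
  and beta2_odd:
    "beta2 a b (Suc (2 * m)) =
       (a * lucas_u (a * b - 2) (Suc m), lucas_u (a * b - 2) m + lucas_u (a * b - 2) (Suc m))"
  using cdseq_eq_lucas_u[of a b m] cdseq_eq_lucas_u[of a b "Suc m"]
  by (simp_all add: beta1_def beta2_def cseq_def dseq_def)

lemma beta1_zero: "beta1 a b 0 = alpha2"
  and beta2_zero: "beta2 a b 0 = alpha1"
  using beta1_even[of a b 0] beta2_even[of a b 0] by (simp_all add: alpha1_def alpha2_def)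

lemma copair_alpha1: "copair a b x alpha1 = 2 * of_int (fst x) - of_int a * of_int (snd x)"
  by (simp add: copair_def bform_def alpha1_def)

lemma copair_alpha2:
  "a \<noteq> 0 \<Longrightarrow> b \<noteq> 0 \<Longrightarrow> copair a b x alpha2 = 2 * of_int (snd x) - of_int b * of_int (fst x)"
  by (simp add: copair_def bform_def alpha2_def field_simps)

lemma bform_scaled:
  "b \<noteq> 0 \<Longrightarrow> of_int b * bform a b x y
     = of_int (2 * b * fst x * fst y - a * b * (fst x * snd y + snd x * fst y) + 2 * a * snd x * snd y)"
  by (simp add: bform_def field_simps)

lemma bform_beta1_beta2_shift:
  assumes "b \<noteq> 0" and "1 \<le> k" and "even j = even k"
  shows "bform a b (beta1 a b j) (beta2 a b k) = bform a b (beta1 a b (Suc j)) (beta2 a b (k - 1))"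
proof -
  have "of_int b * bform a b (beta1 a b j) (beta2 a b k)
      = of_int b * bform a b (beta1 a b (Suc j)) (beta2 a b (k - 1))"
  proof (cases "even j")
    case True
    then obtain p r where j: "j = 2 * p" and "k = 2 * r"
      using assms(3) by (auto elim!: evenE)
    moreover obtain q where "r = Suc q"
      using \<open>k = 2 * r\<close> assms(2) not0_implies_Suc by fastforce
    ultimately have k: "k = 2 * Suc q" and k1: "k - 1 = Suc (2 * q)"
      by simp_all
    show ?thesis
      unfolding k1 unfolding j k bform_scaled[OF assms(1)] beta1_even beta2_even beta1_odd beta2_odd
      by (simp only: lucas_u.simps fst_conv snd_conv of_int_eq_iff) algebra
  next
    case False
    with assms(3) obtain p q where j: "j = Suc (2 * p)" and k: "k = Suc (2 * q)"
      by (metis oddE Suc_eq_plus1 add.commute)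
    have j1: "Suc j = 2 * Suc p"
      using j by simp
    show ?thesis
      unfolding j1 k diff_Suc_1 unfolding j bform_scaled[OF assms(1)] beta1_even beta2_even beta1_odd beta2_odd
      by (simp only: lucas_u.simps fst_conv snd_conv of_int_eq_iff) algebra
  qed
  then show ?thesis
    using assms(1) by simp
qed

lemma copair_beta1_even_alpha1:
  "copair a b (beta1 a b (2 * k)) alpha1
     = of_int (a * (lucas_u (a * b - 2) k - lucas_u (a * b - 2) (Suc k)))"
  unfolding copair_alpha1 beta1_even by (simp add: algebra_simps)

lemma copair_beta2_even_alpha2:
  "a \<noteq> 0 \<Longrightarrow> b \<noteq> 0 \<Longrightarrow> copair a b (beta2 a b (2 * k)) alpha2
     = of_int (b * (lucas_u (a * b - 2) k - lucas_u (a * b - 2) (Suc k)))"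
  unfolding beta2_even by (simp add: copair_alpha2 algebra_simps)

lemma copair_beta1_even_alpha1_antimono:
  assumes "0 < a" and "4 \<le> a * b"
  shows "copair a b (beta1 a b (2 * Suc k)) alpha1 \<le> copair a b (beta1 a b (2 * k)) alpha1"
proof -
  let ?u = "lucas_u (a * b - 2)"
  have "a * (?u (Suc k) - ?u (Suc (Suc k))) \<le> a * (?u k - ?u (Suc k))"
    using lucas_u_difference_mono[of "a * b - 2" k] assms by (intro mult_left_mono) auto
  then show ?thesis
    unfolding copair_beta1_even_alpha1 of_int_le_iff .
qed

lemma copair_beta1_even_alpha1_strict_antimono:
  assumes "0 < a" and "4 < a * b"
  shows "copair a b (beta1 a b (2 * Suc k)) alpha1 < copair a b (beta1 a b (2 * k)) alpha1"
proof -
  let ?u = "lucas_u (a * b - 2)"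
  have "a * (?u (Suc k) - ?u (Suc (Suc k))) < a * (?u k - ?u (Suc k))"
    using lucas_u_difference_strict_mono[of "a * b - 2" k] assms by (intro mult_strict_left_mono) auto
  then show ?thesis
    unfolding copair_beta1_even_alpha1 of_int_less_iff .
qed

theorem lemma3p10:
  fixes a b :: int
  assumes "a \<ge> b" and "b \<ge> 1" and "b \<ge> 2 \<or> (b = 1 \<and> a \<ge> 5)"
  shows "(\<forall>j k::nat. k \<ge> 1 \<longrightarrow> even j = even k \<longrightarrow>
            bform a b (beta1 a b j) (beta2 a b k) = bform a b (beta1 a b (Suc j)) (beta2 a b (k - 1)))
       \<and> (\<forall>k::nat. copair a b (beta1 a b (2 * Suc k)) (beta2 a b 0) \<le> copair a b (beta1 a b (2 * k)) (beta2 a b 0))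
       \<and> (a * b > 4 \<longrightarrow> (\<forall>k::nat. copair a b (beta1 a b (2 * Suc k)) (beta2 a b 0) < copair a b (beta1 a b (2 * k)) (beta2 a b 0)))
       \<and> (\<forall>k::nat. of_int a * copair a b (beta2 a b (2 * k)) (beta1 a b 0) = of_int b * copair a b (beta1 a b (2 * k)) (beta2 a b 0))"
proof -
  have "0 < a" and "a \<noteq> 0" and "b \<noteq> 0"
    using assms by auto
  have "4 \<le> a * b"
  proof (cases "b \<ge> 2")
    case True
    then have "2 * 2 \<le> a * b"
      using assms(1) by (intro mult_mono) auto
    then show ?thesis by simp
  next
    case False
    then have "b = 1"
      using assms(2) by simp
    then show ?thesis
      using assms(3) by simp
  qed
  show ?thesis
    using bform_beta1_beta2_shift[OF \<open>b \<noteq> 0\<close>]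
      copair_beta1_even_alpha1_antimono[OF \<open>0 < a\<close> \<open>4 \<le> a * b\<close>]
      copair_beta1_even_alpha1_strict_antimono[OF \<open>0 < a\<close>]
    by (simp add: beta1_zero beta2_zero copair_beta1_even_alpha1
        copair_beta2_even_alpha2[OF \<open>a \<noteq> 0\<close> \<open>b \<noteq> 0\<close>])
qed

end
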